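(* Let $J$ be a set and let $L_1,L_2$ be symmetric lists with values in $J$. (1) If there is a morphism $L_1\to L_2$ in $\mathrm{SList}(J)$, then $L_2$ is linear if and only if $L_1$ is linear. (2) If $L_1$ or $L_2$ is linear, there is at most one morphism $L_1\to L_2$ in $\mathrm{SList}(J)$.
   Context: $\mathrm{SList}(J)$ is the category of symmetric lists on $J$: objects are finite lists of elements of $J$; morphisms are generated by $\mathrm{sw}_{a,b,l}:a::b::l\to b::a::l$ (for $a,b\in J$, lists $l$) and $x::_mf:x::l\to x::l'$ (for $f:l\to l'$, $x\in J$), subject to: functoriality of $x::_m-$, naturality of $\mathrm{sw}_{a,b,l}$ in $l$, $\mathrm{sw}_{b,a,l}\circ\mathrm{sw}_{a,b,l}=\mathrm{Id}$, and $\mathrm{sw}_{b,c,a::l}\circ(b::_m\mathrm{sw}_{a,c,l})\circ\mathrm{sw}_{a,b,c::l}=(c::_m\mathrm{sw}_{a,b,l})\circ\mathrm{sw}_{a,c,b::l}\circ(a::_m\mathrm{sw}_{b,c,l})$. A symmetric list is linear if its underlying list has no duplicate entries. *)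

theory Defs
  imports Main
begin

text \<open>Formal expressions built from the generators of SList(J).
  MComp g f denotes g composed after f.\<close>
datatype 'j mexp =
    MId "'j list"
  | MSw 'j 'j "'j list"
  | MCons 'j "'j mexp"
  | MComp "'j mexp" "'j mexp"

inductive mtyped :: "'j mexp \<Rightarrow> 'j list \<Rightarrow> 'j list \<Rightarrow> bool" where
  ty_id: "mtyped (MId l) l l"
| ty_sw: "mtyped (MSw a b l) (a # b # l) (b # a # l)"
| ty_cons: "mtyped f l l' \<Longrightarrow> mtyped (MCons x f) (x # l) (x # l')"
| ty_comp: "mtyped f l1 l2 \<Longrightarrow> mtyped g l2 l3 \<Longrightarrow> mtyped (MComp g f) l1 l3"

inductive meq :: "'j list \<Rightarrow> 'j list \<Rightarrow> 'j mexp \<Rightarrow> 'j mexp \<Rightarrow> bool" where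
  eq_refl: "mtyped f l l' \<Longrightarrow> meq l l' f f"
| eq_sym: "meq l l' f g \<Longrightarrow> meq l l' g f"
| eq_trans: "meq l l' f g \<Longrightarrow> meq l l' g h \<Longrightarrow> meq l l' f h"
| eq_comp: "meq l1 l2 f f' \<Longrightarrow> meq l2 l3 g g' \<Longrightarrow> meq l1 l3 (MComp g f) (MComp g' f')"
| eq_cons: "meq l l' f f' \<Longrightarrow> meq (x # l) (x # l') (MCons x f) (MCons x f')"
| eq_idl: "mtyped f l l' \<Longrightarrow> meq l l' (MComp (MId l') f) f"
| eq_idr: "mtyped f l l' \<Longrightarrow> meq l l' (MComp f (MId l)) f"
| eq_assoc: "mtyped f l1 l2 \<Longrightarrow> mtyped g l2 l3 \<Longrightarrow> mtyped h l3 l4 \<Longrightarrow>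
      meq l1 l4 (MComp h (MComp g f)) (MComp (MComp h g) f)"
| eq_cons_id: "meq (x # l) (x # l) (MCons x (MId l)) (MId (x # l))"
| eq_cons_comp: "mtyped f l1 l2 \<Longrightarrow> mtyped g l2 l3 \<Longrightarrow>
      meq (x # l1) (x # l3) (MCons x (MComp g f)) (MComp (MCons x g) (MCons x f))"
| eq_nat: "mtyped f l l' \<Longrightarrow>
      meq (a # b # l) (b # a # l')
        (MComp (MCons b (MCons a f)) (MSw a b l)) (MComp (MSw a b l') (MCons a (MCons b f)))"
| eq_inv: "meq (a # b # l) (a # b # l) (MComp (MSw b a l) (MSw a b l)) (MId (a # b # l))"
| eq_ybe: "meq (a # b # c # l) (c # b # a # l)
      (MComp (MSw b c (a # l)) (MComp (MCons b (MSw a c l)) (MSw a b (c # l))))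
      (MComp (MCons c (MSw a b l)) (MComp (MSw a c (b # l)) (MCons a (MSw b c l))))"

definition linear_slist :: "'j list \<Rightarrow> bool" where
  "linear_slist L \<longleftrightarrow> distinct L"

end

theory Submission
  imports Defs "HOL-Library.Multiset"
begin

text \<open>
  Every generator permutes the underlying list, so source and target of a morphism have the
  same multiset of entries; this gives (1).

  For (2), every morphism expression equals a composite of adjacent transpositions, i.e. a
  word in letters \<open>k\<close> (swap the entries at positions \<open>k\<close> and \<open>k + 1\<close>), and the relations of
  SList(J) yield the Coxeter relations of the symmetric group for these words, uniformly in
  the labels. For a list \<open>l\<close> without duplicates and a rearrangement \<open>m\<close> of it there is a
  canonical word from \<open>l\<close> to \<open>m\<close>, built by placing one entry of \<open>l\<close> after the other, and
  the Coxeter relations show that a letter \<open>k\<close> followed by the canonical word from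
  \<open>swap_at k l\<close> to \<open>m\<close> is the canonical word from \<open>l\<close> to \<open>m\<close>. By induction every word is
  equal to the canonical word determined by its source and target, so parallel morphisms out
  of a linear list coincide.
\<close>

fun msrc :: "'j mexp \<Rightarrow> 'j list" where
  "msrc (MId l) = l"
| "msrc (MSw a b l) = a # b # l"
| "msrc (MCons x f) = x # msrc f"
| "msrc (MComp g f) = msrc f"

fun mtgt :: "'j mexp \<Rightarrow> 'j list" where
  "mtgt (MId l) = l"
| "mtgt (MSw a b l) = b # a # l"
| "mtgt (MCons x f) = x # mtgt f"
| "mtgt (MComp g f) = mtgt g"

fun mwf :: "'j mexp \<Rightarrow> bool" where
  "mwf (MId l) = True"
| "mwf (MSw a b l) = True"
| "mwf (MCons x f) = mwf f"
| "mwf (MComp g f) = (mwf f \<and> mwf g \<and> mtgt f = msrc g)"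

lemma mtyped_iff: "mtyped f l l' \<longleftrightarrow> mwf f \<and> msrc f = l \<and> mtgt f = l'"
proof
  show "mtyped f l l' \<Longrightarrow> mwf f \<and> msrc f = l \<and> mtgt f = l'"
    by (induction rule: mtyped.induct) auto
  show "mwf f \<and> msrc f = l \<and> mtgt f = l' \<Longrightarrow> mtyped f l l'"
    by (induction f arbitrary: l l') (auto intro: mtyped.intros)
qed

lemma meq_mtyped: "meq l l' f g \<Longrightarrow> mtyped f l l' \<and> mtyped g l l'"
  by (induction rule: meq.induct) (auto intro: mtyped.intros)

lemma mtyped_mset_eq: "mtyped f l l' \<Longrightarrow> mset l = mset l'"
  by (induction rule: mtyped.induct) auto

lemma mtyped_distinct_iff: "mtyped f l l' \<Longrightarrow> distinct l' \<longleftrightarrow> distinct l"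
  using mtyped_mset_eq mset_eq_imp_distinct_iff by metis

definition mequiv :: "'j mexp \<Rightarrow> 'j mexp \<Rightarrow> bool" (infix "\<approx>" 50) where
  "f \<approx> g \<longleftrightarrow> meq (msrc f) (mtgt f) f g"

lemma mequivD: "f \<approx> g \<Longrightarrow> mwf f \<and> mwf g \<and> msrc g = msrc f \<and> mtgt g = mtgt f"
  unfolding mequiv_def using meq_mtyped mtyped_iff by metis

lemma meq_imp_mequiv: "meq l l' f g \<Longrightarrow> f \<approx> g"
  unfolding mequiv_def using meq_mtyped mtyped_iff by metis

lemma mequiv_imp_meq: "f \<approx> g \<Longrightarrow> mtyped f l l' \<Longrightarrow> meq l l' f g"
  unfolding mequiv_def mtyped_iff by simp

lemma mequiv_refl: "mwf f \<Longrightarrow> f \<approx> f"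
  by (rule meq_imp_mequiv, rule eq_refl) (simp add: mtyped_iff)

lemma mequiv_sym: "f \<approx> g \<Longrightarrow> g \<approx> f"
  using mequivD by (metis mequiv_def eq_sym)

lemma mequiv_trans [trans]: "f \<approx> g \<Longrightarrow> g \<approx> h \<Longrightarrow> f \<approx> h"
  using mequivD by (metis mequiv_def eq_trans)

lemma mequiv_comp: "f \<approx> f' \<Longrightarrow> g \<approx> g' \<Longrightarrow> mtgt f = msrc g \<Longrightarrow> MComp g f \<approx> MComp g' f'"
  unfolding mequiv_def by (auto intro: eq_comp)

lemma mequiv_comp_left: "g \<approx> g' \<Longrightarrow> mwf f \<Longrightarrow> mtgt f = msrc g \<Longrightarrow> MComp g f \<approx> MComp g' f"
  using mequiv_comp mequiv_refl by blast

lemma mequiv_cons: "f \<approx> f' \<Longrightarrow> MCons x f \<approx> MCons x f'"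
  unfolding mequiv_def by (auto intro: eq_cons)

lemma mequiv_id_left: "mwf f \<Longrightarrow> mtgt f = l \<Longrightarrow> MComp (MId l) f \<approx> f"
  by (rule meq_imp_mequiv, rule eq_idl) (simp add: mtyped_iff)

lemma mequiv_id_right: "mwf f \<Longrightarrow> msrc f = l \<Longrightarrow> MComp f (MId l) \<approx> f"
  by (rule meq_imp_mequiv, rule eq_idr) (simp add: mtyped_iff)

lemma mequiv_assoc:
  "mwf f \<Longrightarrow> mwf g \<Longrightarrow> mwf h \<Longrightarrow> mtgt f = msrc g \<Longrightarrow> mtgt g = msrc h \<Longrightarrow>
   MComp h (MComp g f) \<approx> MComp (MComp h g) f"
  by (rule meq_imp_mequiv, rule eq_assoc) (simp_all add: mtyped_iff)

lemma mequiv_cons_id: "MCons x (MId l) \<approx> MId (x # l)"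
  by (rule meq_imp_mequiv, rule eq_cons_id)

lemma mequiv_cons_comp:
  "mwf f \<Longrightarrow> mwf g \<Longrightarrow> mtgt f = msrc g \<Longrightarrow> MCons x (MComp g f) \<approx> MComp (MCons x g) (MCons x f)"
  by (rule meq_imp_mequiv, rule eq_cons_comp) (simp_all add: mtyped_iff)

lemma mequiv_sw_natural:
  "mwf f \<Longrightarrow> MComp (MCons b (MCons a f)) (MSw a b (msrc f)) \<approx>
             MComp (MSw a b (mtgt f)) (MCons a (MCons b f))"
  by (rule meq_imp_mequiv, rule eq_nat) (simp_all add: mtyped_iff)

lemma mequiv_sw_inverse: "MComp (MSw b a l) (MSw a b l) \<approx> MId (a # b # l)"
  by (rule meq_imp_mequiv, rule eq_inv)

lemma mequiv_sw_hexagon: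
  "MComp (MSw b c (a # l)) (MComp (MCons b (MSw a c l)) (MSw a b (c # l))) \<approx>
   MComp (MCons c (MSw a b l)) (MComp (MSw a c (b # l)) (MCons a (MSw b c l)))"
  by (rule meq_imp_mequiv, rule eq_ybe)

section \<open>Words in adjacent transpositions\<close>

text \<open>A letter \<open>k\<close> swaps the entries at positions \<open>k\<close> and \<open>k + 1\<close>; on lists with at most
  \<open>k + 1\<close> entries it acts as the identity.\<close>

fun swap_at :: "nat \<Rightarrow> 'a list \<Rightarrow> 'a list" where
  "swap_at 0 (a # b # r) = b # a # r"
| "swap_at (Suc k) (x # r) = x # swap_at k r"
| "swap_at _ l = l"

fun mswap_at :: "nat \<Rightarrow> 'j list \<Rightarrow> 'j mexp" where
  "mswap_at 0 (a # b # r) = MSw a b r"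
| "mswap_at (Suc k) (x # r) = MCons x (mswap_at k r)"
| "mswap_at _ l = MId l"

fun mword :: "'j list \<Rightarrow> nat list \<Rightarrow> 'j mexp" where
  "mword l [] = MId l"
| "mword l (k # w) = MComp (mword (swap_at k l) w) (mswap_at k l)"

fun word_of :: "'j mexp \<Rightarrow> nat list" where
  "word_of (MId l) = []"
| "word_of (MSw a b l) = [0]"
| "word_of (MCons x f) = map Suc (word_of f)"
| "word_of (MComp g f) = word_of f @ word_of g"

lemma mswap_at_typed [simp]:
  "mwf (mswap_at k l) \<and> msrc (mswap_at k l) = l \<and> mtgt (mswap_at k l) = swap_at k l"
  by (induction k l rule: mswap_at.induct) auto

lemma length_swap_at [simp]: "length (swap_at k l) = length l"
  by (induction k l rule: swap_at.induct) auto

lemma mset_swap_at [simp]: "mset (swap_at k l) = mset l"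
  by (induction k l rule: swap_at.induct) auto

lemma length_fold_swap_at [simp]: "length (fold swap_at w l) = length l"
  by (induction w arbitrary: l) auto

lemma mset_fold_swap_at [simp]: "mset (fold swap_at w l) = mset l"
  by (induction w arbitrary: l) auto

lemma mword_typed [simp]:
  "mwf (mword l w) \<and> msrc (mword l w) = l \<and> mtgt (mword l w) = fold swap_at w l"
  by (induction w arbitrary: l) auto

lemma mword_append: "mword l (u @ v) \<approx> MComp (mword (fold swap_at u l) v) (mword l u)"
proof (induction u arbitrary: l)
  case Nil
  show ?case by (simp add: mequiv_sym mequiv_id_right)
next
  case (Cons k u)
  have "mword l ((k # u) @ v) \<approx>
      MComp (MComp (mword (fold swap_at u (swap_at k l)) v) (mword (swap_at k l) u)) (mswap_at k l)"
    using Cons.IH by (simp add: mequiv_comp_left)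
  also have "\<dots> \<approx> MComp (mword (fold swap_at u (swap_at k l)) v)
                          (MComp (mword (swap_at k l) u) (mswap_at k l))"
    by (rule mequiv_sym, rule mequiv_assoc) auto
  finally show ?case by simp
qed

lemma mword_map_Suc: "mword (x # l) (map Suc w) \<approx> MCons x (mword l w)"
proof (induction w arbitrary: l)
  case Nil
  show ?case by (simp add: mequiv_sym mequiv_cons_id)
next
  case (Cons k w)
  have "mword (x # l) (map Suc (k # w)) \<approx> MComp (MCons x (mword (swap_at k l) w)) (MCons x (mswap_at k l))"
    using Cons.IH by (simp add: mequiv_comp_left)
  also have "\<dots> \<approx> MCons x (mword l (k # w))"
    by (simp add: mequiv_sym mequiv_cons_comp)
  finally show ?case .
qed

lemma mequiv_mword_word_of: "mwf f \<Longrightarrow> f \<approx> mword (msrc f) (word_of f)"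
proof (induction f)
  case (MId l)
  then show ?case by (simp add: mequiv_refl)
next
  case (MSw a b l)
  then show ?case by (simp add: mequiv_sym mequiv_id_left)
next
  case (MCons x f)
  then show ?case using mequiv_cons mword_map_Suc mequiv_sym mequiv_trans by fastforce
next
  case (MComp g f)
  then have wf: "mwf f" "mwf g" "mtgt f = msrc g" by auto
  have f: "f \<approx> mword (msrc f) (word_of f)" and g: "g \<approx> mword (msrc g) (word_of g)"
    using MComp wf by auto
  have fold_eq: "fold swap_at (word_of f) (msrc f) = msrc g"
    using mequivD[OF f] wf by simp
  have "MComp g f \<approx> MComp (mword (msrc g) (word_of g)) (mword (msrc f) (word_of f))"
    using mequiv_comp[OF f g] wf by simp
  also have "\<dots> \<approx> mword (msrc f) (word_of f @ word_of g)"
    using mword_append[of "msrc f" "word_of f" "word_of g"] fold_eq by (simp add: mequiv_sym)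
  finally show ?case by (simp only: msrc.simps word_of.simps)
qed

section \<open>Coxeter relations\<close>

definition word_eq :: "'j itself \<Rightarrow> nat \<Rightarrow> nat list \<Rightarrow> nat list \<Rightarrow> bool" where
  "word_eq T n u v \<longleftrightarrow> (\<forall>l::'j list. length l = n \<longrightarrow> mword l u \<approx> mword l v)"

lemma word_eq_refl: "word_eq TYPE('j) n u u"
  unfolding word_eq_def by (simp add: mequiv_refl)

lemma word_eq_sym: "word_eq TYPE('j) n u v \<Longrightarrow> word_eq TYPE('j) n v u"
  unfolding word_eq_def by (simp add: mequiv_sym)

lemma word_eq_trans [trans]:
  "word_eq TYPE('j) n u v \<Longrightarrow> word_eq TYPE('j) n v w \<Longrightarrow> word_eq TYPE('j) n u w"
  unfolding word_eq_def by (metis mequiv_trans)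

lemma word_eq_append:
  assumes u: "word_eq TYPE('j) n u u'" and v: "word_eq TYPE('j) n v v'"
  shows "word_eq TYPE('j) n (u @ v) (u' @ v')"
  unfolding word_eq_def
proof (intro allI impI)
  fix l :: "'j list"
  assume l: "length l = n"
  have uu: "mword l u \<approx> mword l u'" using u l unfolding word_eq_def by auto
  then have same: "fold swap_at u' l = fold swap_at u l" using mequivD by fastforce
  have vv: "mword (fold swap_at u l) v \<approx> mword (fold swap_at u l) v'"
    using v l unfolding word_eq_def by auto
  have "mword l (u @ v) \<approx> MComp (mword (fold swap_at u l) v) (mword l u)"
    by (rule mword_append)
  also have "\<dots> \<approx> MComp (mword (fold swap_at u l) v') (mword l u')"
    by (rule mequiv_comp[OF uu vv]) simp
  also have "\<dots> \<approx> mword l (u' @ v')"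
    using mword_append[of l u' v'] same by (simp add: mequiv_sym)
  finally show "mword l (u @ v) \<approx> mword l (u' @ v')" .
qed

lemma word_eq_in_context:
  "word_eq TYPE('j) n u v \<Longrightarrow> word_eq TYPE('j) n (p @ u @ q) (p @ v @ q)"
  by (intro word_eq_append word_eq_refl)

lemma word_eq_map_Suc:
  assumes "word_eq TYPE('j) n u v"
  shows "word_eq TYPE('j) (Suc n) (map Suc u) (map Suc v)"
  unfolding word_eq_def
proof (intro allI impI)
  fix l :: "'j list"
  assume "length l = Suc n"
  then obtain x r where l: "l = x # r" and r: "length r = n" by (cases l) auto
  have "mword (x # r) (map Suc u) \<approx> MCons x (mword r u)" by (rule mword_map_Suc)
  also have "\<dots> \<approx> MCons x (mword r v)" using assms r by (simp add: word_eq_def mequiv_cons)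
  also have "\<dots> \<approx> mword (x # r) (map Suc v)" by (rule mequiv_sym, rule mword_map_Suc)
  finally show "mword l (map Suc u) \<approx> mword l (map Suc v)" using l by simp
qed

lemma mswap_at_beyond_end: "length l \<le> Suc k \<Longrightarrow> mswap_at k l \<approx> MId l \<and> swap_at k l = l"
proof (induction k l rule: mswap_at.induct)
  case (2 k x r)
  then show ?case using mequiv_cons mequiv_cons_id mequiv_trans by fastforce
qed (auto simp: mequiv_refl)

lemma word_eq_beyond_end: "n \<le> Suc k \<Longrightarrow> word_eq TYPE('j) n [k] []"
  unfolding word_eq_def
proof (intro allI impI)
  fix l :: "'j list"
  assume "n \<le> Suc k" "length l = n"
  then have trivial: "mswap_at k l \<approx> MId l \<and> swap_at k l = l" by (simp add: mswap_at_beyond_end)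
  have "mword l [k] \<approx> mswap_at k l" using trivial by (simp add: mequiv_id_left)
  also have "\<dots> \<approx> mword l []" using trivial by simp
  finally show "mword l [k] \<approx> mword l []" .
qed

lemma word_eq_cons_beyond_end: "n \<le> Suc k \<Longrightarrow> word_eq TYPE('j) n (k # w) w"
  using word_eq_append[OF word_eq_beyond_end word_eq_refl] by simp

lemma length_ge_2_cases:
  assumes "2 \<le> length l"
  obtains a b r where "l = a # b # r"
  using assms by (cases l; cases "tl l") auto

lemma word_eq_square: "2 \<le> n \<Longrightarrow> word_eq TYPE('j) n [0, 0] []"
  unfolding word_eq_def
proof (intro allI impI)
  fix l :: "'j list"
  assume "2 \<le> n" "length l = n"
  then obtain a b r where l: "l = a # b # r" using length_ge_2_cases by metis
  have "mword l [0, 0] \<approx> MComp (MSw b a r) (MSw a b r)"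
    using l by (simp add: mequiv_comp_left mequiv_id_left)
  also have "\<dots> \<approx> mword l []" using l by (simp add: mequiv_sw_inverse)
  finally show "mword l [0, 0] \<approx> mword l []" .
qed

lemma word_eq_far_commute: "2 \<le> n \<Longrightarrow> word_eq TYPE('j) n [0, Suc (Suc k)] [Suc (Suc k), 0]"
  unfolding word_eq_def
proof (intro allI impI)
  fix l :: "'j list"
  assume "2 \<le> n" "length l = n"
  then obtain a b r where l: "l = a # b # r" using length_ge_2_cases by metis
  have "mword l [0, Suc (Suc k)] \<approx>
      MComp (MCons b (MCons a (mswap_at k r))) (MSw a b (msrc (mswap_at k r)))"
    using l by (simp add: mequiv_comp_left mequiv_id_left)
  also have "\<dots> \<approx> MComp (MSw a b (mtgt (mswap_at k r))) (MCons a (MCons b (mswap_at k r)))"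
    by (rule mequiv_sw_natural) simp
  also have "\<dots> \<approx> mword l [Suc (Suc k), 0]"
    by (rule mequiv_sym) (simp add: l mequiv_comp_left mequiv_id_left)
  finally show "mword l [0, Suc (Suc k)] \<approx> mword l [Suc (Suc k), 0]" .
qed

lemma word_eq_braid: "3 \<le> n \<Longrightarrow> word_eq TYPE('j) n [0, 1, 0] [1, 0, 1]"
  unfolding word_eq_def
proof (intro allI impI)
  fix l :: "'j list"
  assume "3 \<le> n" "length l = n"
  then obtain a b c r where l: "l = a # b # c # r"
    by (cases l; cases "tl l"; cases "tl (tl l)") auto
  have "mword l [0, 1, 0] \<approx>
      MComp (MComp (MSw b c (a # r)) (MCons b (MSw a c r))) (MSw a b (c # r))"
    using l by (simp add: mequiv_comp_left mequiv_id_left numeral_eq_Suc)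
  also have "\<dots> \<approx> MComp (MSw b c (a # r)) (MComp (MCons b (MSw a c r)) (MSw a b (c # r)))"
    by (rule mequiv_sym, rule mequiv_assoc) auto
  also have "\<dots> \<approx> MComp (MCons c (MSw a b r)) (MComp (MSw a c (b # r)) (MCons a (MSw b c r)))"
    by (rule mequiv_sw_hexagon)
  also have "\<dots> \<approx> MComp (MComp (MCons c (MSw a b r)) (MSw a c (b # r))) (MCons a (MSw b c r))"
    by (rule mequiv_assoc) auto
  also have "\<dots> \<approx> mword l [1, 0, 1]"
    by (rule mequiv_sym) (simp add: l mequiv_comp_left mequiv_id_left numeral_eq_Suc)
  finally show "mword l [0, 1, 0] \<approx> mword l [1, 0, 1]" .
qed

lemma word_eq_commute_shifted:
  "2 \<le> n \<Longrightarrow> word_eq TYPE('j) n (0 # map Suc (map Suc w)) (map Suc (map Suc w) @ [0])"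
proof (induction w)
  case Nil
  show ?case by (simp add: word_eq_refl)
next
  case (Cons k w)
  have "word_eq TYPE('j) n ([] @ [0, Suc (Suc k)] @ map Suc (map Suc w))
                           ([] @ [Suc (Suc k), 0] @ map Suc (map Suc w))"
    using Cons.prems by (intro word_eq_in_context word_eq_far_commute)
  also have "word_eq TYPE('j) n \<dots> ([Suc (Suc k)] @ (map Suc (map Suc w) @ [0]) @ [])"
    using word_eq_in_context[OF Cons.IH[OF Cons.prems], of "[Suc (Suc k)]" "[]"] by simp
  finally show ?case by simp
qed

lemma upt_Suc_0: "[0..<Suc j] = 0 # map Suc [0..<j]"
  by (simp add: map_Suc_upt upt_conv_Cons del: upt_Suc)

text \<open>The word \<open>[0..<k]\<close> moves the head of a list to position \<open>k\<close>. Both sides move the first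
  two entries to positions \<open>i\<close> and \<open>j + 1\<close>, the left side after swapping them first.\<close>

lemma word_eq_sink_pair:
  "i \<le> j \<Longrightarrow> j + 2 \<le> n \<Longrightarrow>
   word_eq TYPE('j) n (0 # map Suc [0..<i] @ [0..<Suc j]) (map Suc [0..<j] @ [0..<i])"
proof (induction i arbitrary: j n)
  case 0
  have "word_eq TYPE('j) n ([] @ [0, 0] @ map Suc [0..<j]) ([] @ [] @ map Suc [0..<j])"
    using "0.prems" by (intro word_eq_in_context word_eq_square) simp
  then show ?case by (simp add: upt_Suc_0 del: upt_Suc)
next
  case (Suc i)
  then obtain j' n' where jn: "j = Suc j'" "n = Suc n'" "i \<le> j'" "j' + 2 \<le> n'"
    by (cases j; cases n) auto
  define P where "P = map Suc (map Suc [0..<i])"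
  define Q where "Q = map Suc (map Suc [0..<j'])"
  have "word_eq TYPE('j) n ([0, 1] @ (P @ [0]) @ (1 # Q)) ([0, 1] @ (0 # P) @ (1 # Q))"
    unfolding P_def
    by (intro word_eq_in_context, rule word_eq_sym, intro word_eq_commute_shifted) (use jn in simp)
  also have "word_eq TYPE('j) n \<dots> ([] @ [0, 1, 0] @ (P @ 1 # Q))" by (simp add: word_eq_refl)
  also have "word_eq TYPE('j) n \<dots> ([] @ [1, 0, 1] @ (P @ 1 # Q))"
    using jn by (intro word_eq_in_context word_eq_braid) simp
  also have "word_eq TYPE('j) n \<dots> ([1, 0] @ map Suc (0 # map Suc [0..<i] @ [0..<Suc j']) @ [])"
    unfolding P_def Q_def by (simp add: upt_Suc_0 word_eq_refl del: upt_Suc)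
  also have "word_eq TYPE('j) n \<dots> ([1, 0] @ map Suc (map Suc [0..<j'] @ [0..<i]) @ [])"
    unfolding jn(2)
    by (intro word_eq_in_context word_eq_map_Suc, rule Suc.IH) (use jn in simp_all)
  also have "word_eq TYPE('j) n \<dots> ([1] @ (0 # Q) @ map Suc [0..<i])"
    unfolding Q_def by (simp add: word_eq_refl)
  also have "word_eq TYPE('j) n \<dots> ([1] @ (Q @ [0]) @ map Suc [0..<i])"
    unfolding Q_def using jn by (intro word_eq_in_context word_eq_commute_shifted) simp
  finally show ?case unfolding P_def Q_def jn by (simp add: upt_Suc_0 del: upt_Suc)
qed

section \<open>Canonical words\<close>

fun position :: "'a \<Rightarrow> 'a list \<Rightarrow> nat" where
  "position x [] = 0"
| "position x (y # ys) = (if x = y then 0 else Suc (position x ys))"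

definition insert_at :: "nat \<Rightarrow> 'a \<Rightarrow> 'a list \<Rightarrow> 'a list" where
  "insert_at k x ys = take k ys @ x # drop k ys"

fun canon_word :: "'a list \<Rightarrow> 'a list \<Rightarrow> nat list" where
  "canon_word [] m = []"
| "canon_word (x # r) m = map Suc (canon_word r (remove1 x m)) @ [0..<position x m]"

lemma position_append: "x \<notin> set xs \<Longrightarrow> position x (xs @ ys) = length xs + position x ys"
  by (induction xs) auto

lemma position_remove1_insert_at:
  assumes "x \<notin> set ys" "k \<le> length ys"
  shows "position x (insert_at k x ys) = k" and "remove1 x (insert_at k x ys) = ys"
proof -
  have "x \<notin> set (take k ys)" using assms in_set_takeD by fastforce
  then show "position x (insert_at k x ys) = k" and "remove1 x (insert_at k x ys) = ys"
    using assms unfolding insert_at_def by (simp_all add: position_append remove1_append)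
qed

lemma set_insert_at [simp]: "set (insert_at k x ys) = insert x (set ys)"
proof -
  have "set (insert_at k x ys) = insert x (set (take k ys @ drop k ys))"
    unfolding insert_at_def set_append by simp
  then show ?thesis by simp
qed

lemma length_insert_at [simp]: "length (insert_at k x ys) = Suc (length ys)"
  unfolding insert_at_def by simp

lemma insert_at_append: "length xs = k \<Longrightarrow> insert_at k x (xs @ ys) = xs @ x # ys"
  unfolding insert_at_def by simp

lemma insert_at_commute:
  assumes "i \<le> j" "j \<le> length R"
  shows "insert_at i x (insert_at j y R) = insert_at (Suc j) y (insert_at i x R)"
proof -
  define A where "A = take i R"
  define B where "B = take (j - i) (drop i R)"
  define C where "C = drop j R"
  have R: "R = A @ B @ C" unfolding A_def B_def C_def using assms
    by (metis append.assoc append_take_drop_id drop_drop le_add_diff_inverse2 take_add)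
  have A: "length A = i" and AB: "length (A @ B) = j"
    using assms unfolding A_def B_def by auto
  have "insert_at i x (insert_at j y R) = A @ x # B @ y # C"
    using R insert_at_append[OF AB] insert_at_append[OF A] by simp
  moreover have "insert_at (Suc j) y (insert_at i x R) = A @ x # B @ y # C"
    using R insert_at_append[OF A] insert_at_append[of "A @ x # B" "Suc j"] AB by simp
  ultimately show ?thesis by simp
qed

lemma canon_word_insert_at_pair:
  assumes "x \<noteq> y" "x \<notin> set R" "y \<notin> set R" "i \<le> j" "j \<le> length R"
  shows "canon_word (x # y # w) (insert_at i x (insert_at j y R)) =
           map Suc (map Suc (canon_word w R) @ [0..<j]) @ [0..<i]"
    and "canon_word (y # x # w) (insert_at i x (insert_at j y R)) =
           map Suc (map Suc (canon_word w R) @ [0..<i]) @ [0..<Suc j]"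
proof -
  show "canon_word (x # y # w) (insert_at i x (insert_at j y R)) =
      map Suc (map Suc (canon_word w R) @ [0..<j]) @ [0..<i]"
    using assms by (simp add: position_remove1_insert_at)
  have "insert_at i x (insert_at j y R) = insert_at (Suc j) y (insert_at i x R)"
    using assms by (simp add: insert_at_commute)
  then show "canon_word (y # x # w) (insert_at i x (insert_at j y R)) =
      map Suc (map Suc (canon_word w R) @ [0..<i]) @ [0..<Suc j]"
    using assms by (simp add: position_remove1_insert_at)
qed

lemma distinct_insert_at_pair_cases:
  assumes "distinct L" "a \<in> set L" "b \<in> set L" "a \<noteq> b"
  obtains R i j where "i \<le> j" "j \<le> length R" "a \<notin> set R" "b \<notin> set R"
      "L = insert_at i a (insert_at j b R)"
    | R i j where "i \<le> j" "j \<le> length R" "a \<notin> set R" "b \<notin> set R"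
      "L = insert_at i b (insert_at j a R)"
proof -
  have split: "\<exists>R i j. i \<le> j \<and> j \<le> length R \<and> p \<notin> set R \<and> q \<notin> set R \<and>
      L = insert_at i p (insert_at j q R)" if "L = xs @ p # us @ q # vs" for xs p us q vs
  proof (intro exI conjI)
    let ?R = "xs @ us @ vs"
    show "length xs \<le> length xs + length us" "length xs + length us \<le> length ?R" by simp_all
    show "p \<notin> set ?R" "q \<notin> set ?R" using assms that by auto
    show "L = insert_at (length xs) p (insert_at (length xs + length us) q ?R)"
      using that insert_at_append[of "xs @ us" _ q vs] insert_at_append[of xs _ p "us @ q # vs"]
      by simp
  qed
  obtain xs ys where L: "L = xs @ a # ys" using assms split_list by metis
  show thesis
  proof (cases "b \<in> set ys")
    case True
    then obtain us vs where "ys = us @ b # vs" using split_list by metis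
    then have "L = xs @ a # us @ b # vs" using L by simp
    then show thesis using split that(1) by blast
  next
    case False
    then have "b \<in> set xs" using assms L by auto
    then obtain us vs where "xs = us @ b # vs" using split_list by metis
    then have "L = us @ b # vs @ a # ys" using L by simp
    then show thesis using split that(2) by blast
  qed
qed

lemma word_eq_canon_word_swap_pair:
  assumes "x \<noteq> y" "x \<notin> set R" "y \<notin> set R" "i \<le> j" "j \<le> length R"
  defines "M \<equiv> insert_at i x (insert_at j y R)"
  shows "word_eq TYPE('j) (length R + 2) (0 # canon_word (y # x # w) M) (canon_word (x # y # w) M)"
    and "word_eq TYPE('j) (length R + 2) (0 # canon_word (x # y # w) M) (canon_word (y # x # w) M)"
proof -
  let ?n = "length R + 2"
  define D where "D = map Suc (map Suc (canon_word w R))"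
  have "word_eq TYPE('j) ?n ([] @ (0 # D) @ (map Suc [0..<i] @ [0..<Suc j]))
                            ([] @ (D @ [0]) @ (map Suc [0..<i] @ [0..<Suc j]))"
    unfolding D_def by (intro word_eq_in_context word_eq_commute_shifted) simp
  also have "word_eq TYPE('j) ?n \<dots> (D @ (map Suc [0..<j] @ [0..<i]) @ [])"
    using assms word_eq_in_context[OF word_eq_sink_pair, of i j ?n D "[]"] by simp
  finally show swap: "word_eq TYPE('j) ?n (0 # canon_word (y # x # w) M) (canon_word (x # y # w) M)"
    using canon_word_insert_at_pair[OF assms(1-5)] unfolding M_def D_def by (simp del: upt_Suc)
  have "word_eq TYPE('j) ?n ([0] @ canon_word (x # y # w) M) ([0] @ 0 # canon_word (y # x # w) M)"
    using word_eq_append[OF word_eq_refl word_eq_sym[OF swap]] .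
  also have "word_eq TYPE('j) ?n \<dots> ([] @ canon_word (y # x # w) M)"
    using word_eq_append[OF word_eq_square word_eq_refl, of ?n "canon_word (y # x # w) M"] by simp
  finally show "word_eq TYPE('j) ?n (0 # canon_word (x # y # w) M) (canon_word (y # x # w) M)"
    by simp
qed

lemma word_eq_swap_canon_word:
  "distinct l \<Longrightarrow> mset m = mset l \<Longrightarrow>
   word_eq TYPE('j) (length l) (k # canon_word (swap_at k l) m) (canon_word l m)"
proof (induction k l arbitrary: m rule: swap_at.induct)
  case (1 a b w)
  have n: "length m = length (a # b # w)" using "1.prems"(2) by (metis size_mset)
  have "distinct m" using "1.prems" mset_eq_imp_distinct_iff by metis
  moreover have ab: "a \<in> set m" "b \<in> set m" "a \<noteq> b"
    using "1.prems" mset_eq_setD by fastforce+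
  ultimately show ?case
  proof (cases rule: distinct_insert_at_pair_cases)
    case (1 R i j)
    have "word_eq TYPE('j) (length R + 2) (0 # canon_word (b # a # w) m) (canon_word (a # b # w) m)"
      unfolding 1(5) using 1 ab by (intro word_eq_canon_word_swap_pair(1))
    moreover have "length (a # b # w) = length R + 2" using n 1 by simp
    ultimately show ?thesis by (simp only: swap_at.simps(1))
  next
    case (2 R i j)
    have "word_eq TYPE('j) (length R + 2) (0 # canon_word (b # a # w) m) (canon_word (a # b # w) m)"
      unfolding 2(5) using 2 ab by (intro word_eq_canon_word_swap_pair(2)) auto
    moreover have "length (a # b # w) = length R + 2" using n 2 by simp
    ultimately show ?thesis by (simp only: swap_at.simps(1))
  qed
next
  case (2 k x r)
  have "word_eq TYPE('j) (length r) (k # canon_word (swap_at k r) (remove1 x m)) (canon_word r (remove1 x m))"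
    using "2.prems" by (intro "2.IH") auto
  then have "word_eq TYPE('j) (length (x # r))
      (map Suc (k # canon_word (swap_at k r) (remove1 x m)) @ [0..<position x m])
      (map Suc (canon_word r (remove1 x m)) @ [0..<position x m])"
    by (simp only: length_Cons) (intro word_eq_append word_eq_map_Suc word_eq_refl)
  then show ?case by simp
qed (simp_all add: word_eq_beyond_end word_eq_cons_beyond_end)

lemma word_eq_canon_word_self: "word_eq TYPE('j) (length l) (canon_word l l) []"
proof (induction l)
  case Nil
  show ?case by (simp add: word_eq_refl)
next
  case (Cons x r)
  then show ?case using word_eq_map_Suc[OF Cons.IH] by simp
qed

lemma word_eq_canon_word:
  "distinct l \<Longrightarrow> word_eq TYPE('j) (length l) u (canon_word l (fold swap_at u l))"
proof (induction u arbitrary: l)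
  case Nil
  show ?case by (simp add: word_eq_sym word_eq_canon_word_self)
next
  case (Cons k u)
  have "distinct (swap_at k l)"
    using Cons.prems mset_eq_imp_distinct_iff mset_swap_at by metis
  then have "word_eq TYPE('j) (length l) ([k] @ u @ [])
      ([k] @ canon_word (swap_at k l) (fold swap_at u (swap_at k l)) @ [])"
    using word_eq_in_context[OF Cons.IH, of "swap_at k l" "[k]" "[]"] by simp
  also have "word_eq TYPE('j) (length l) \<dots> (canon_word l (fold swap_at u (swap_at k l)))"
    using word_eq_swap_canon_word[where 'j = 'j, OF Cons.prems] by simp
  finally show ?case by simp
qed

lemma meq_if_distinct:
  fixes f g :: "'j mexp"
  assumes "distinct l" "mtyped f l l'" "mtyped g l l'"
  shows "meq l l' f g"
proof -
  have word: "h \<approx> mword l (canon_word l l')" if "mtyped h l l'" for h :: "'j mexp"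
  proof -
    have h: "mwf h" "msrc h = l" "mtgt h = l'" using that mtyped_iff by blast+
    then have nf: "h \<approx> mword l (word_of h)" using mequiv_mword_word_of by metis
    then have "fold swap_at (word_of h) l = l'" using mequivD h by fastforce
    then have "mword l (word_of h) \<approx> mword l (canon_word l l')"
      using word_eq_canon_word[OF assms(1), of "word_of h"] unfolding word_eq_def by blast
    with nf show ?thesis by (rule mequiv_trans)
  qed
  have "f \<approx> g" using word[OF assms(2)] word[OF assms(3)] mequiv_sym mequiv_trans by blast
  then show ?thesis using assms(2) by (rule mequiv_imp_meq)
qed

theorem lemma4p11:
  fixes J :: "'j set" and L1 L2 :: "'j list"
  assumes "set L1 \<subseteq> J" and "set L2 \<subseteq> J"
  shows "((\<exists>f. mtyped f L1 L2) \<longrightarrow> (linear_slist L2 \<longleftrightarrow> linear_slist L1))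
       \<and> ((linear_slist L1 \<or> linear_slist L2) \<longrightarrow>
            (\<forall>f g. mtyped f L1 L2 \<longrightarrow> mtyped g L1 L2 \<longrightarrow> meq L1 L2 f g))"
  unfolding linear_slist_def using mtyped_distinct_iff meq_if_distinct by metis

end
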